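(* Let $H$ and $K$ be permutation groups on $[p]$ and $[q]$, and let $G=H\otimes K=\{P_h\otimes P_k: h\in H,k\in K\}$, a permutation group on $[pq]$. Let $M\in\mathbb{R}^{pq\times pq}$ satisfy $MP=PM$ for all $P\in G$, and define $\hat M\in\mathbb{R}^{p^2\times q^2}$ by $$\hat M_{(i'-1)p+i,\,(j'-1)q+j}=M_{(i-1)q+j,\,(i'-1)q+j'}\qquad (i,i'\in[p],\ j,j'\in[q]).$$ Then $\mathrm{rank}(\hat M)\le\min\big(\dim\mathcal{E}(H),\dim\mathcal{E}(K)\big)$.
   Context: For a permutation $g$ of $[m]$, $P_g$ is the $m\times m$ permutation matrix with $(P_g)_{i,j}=1$ iff $i=g(j)$; $\otimes$ denotes the Kronecker product. For a permutation group $L$ on $[m]$, $\mathcal{E}(L)=\{X\in\mathbb{R}^{m\times m}: XP_g=P_gX \text{ for all } g\in L\}$. *)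

theory Defs
  imports "HOL-Analysis.Analysis"
begin

definition perm_group :: "('a \<Rightarrow> 'a) set \<Rightarrow> bool" where
  "perm_group L \<longleftrightarrow> (\<forall>g\<in>L. bij g) \<and> id \<in> L \<and>
     (\<forall>g\<in>L. \<forall>h\<in>L. g \<circ> h \<in> L) \<and> (\<forall>g\<in>L. inv g \<in> L)"

definition permmat :: "('n::finite \<Rightarrow> 'n) \<Rightarrow> real^'n^'n" where
  "permmat g = (\<chi> i j. if i = g j then 1 else 0)"

text \<open>Kronecker product; the index (i-1)q+j of [pq] is identified with the pair (i,j).\<close>
definition kron :: "real^'p::finite^'p \<Rightarrow> real^'q::finite^'q \<Rightarrow> real^('p::finite \<times> 'q::finite)^('p \<times> 'q)" where
  "kron A B = (\<chi> r c. (A $ fst r $ fst c) * (B $ snd r $ snd c))"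

definition commutant :: "('n \<Rightarrow> 'n) set \<Rightarrow> (real^'n::finite^'n) set" where
  "commutant L = {X. \<forall>g\<in>L. X ** permmat g = permmat g ** X}"

text \<open>The reshaped matrix: row index (i'-1)p+i is the pair (i',i), column index
(j'-1)q+j is the pair (j',j); entry M_{(i-1)q+j,(i'-1)q+j'}.\<close>
definition reshape :: "real^('p::finite \<times> 'q::finite)^('p \<times> 'q) \<Rightarrow> real^('q \<times> 'q)^('p \<times> 'p)" where
  "reshape M = (\<chi> r c. M $ (snd r, snd c) $ (fst r, fst c))"

end

theory Submission
  imports Defs
begin

text \<open>Commuting with \<open>P\<^sub>h \<otimes> P\<^sub>k\<close> makes \<open>M\<close> invariant under relabelling rows and
  columns by \<open>h\<close> in the first and \<open>k\<close> in the second factor. Taking \<open>k = id\<close>, every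
  slice \<open>(i, i') \<mapsto> M\<^bsub>(i,j),(i',j')\<^esub>\<close> with \<open>j, j'\<close> fixed lies in \<open>\<E>(H)\<close>; taking
  \<open>h = id\<close>, every slice \<open>(j, j') \<mapsto> M\<^bsub>(i,j),(i',j')\<^esub>\<close> with \<open>i, i'\<close> fixed lies in \<open>\<E>(K)\<close>.
  The columns of the reshaped matrix are the vectorised slices of the first kind and its
  rows those of the second kind, so its column rank is at most \<open>dim \<E>(H)\<close> and its row
  rank at most \<open>dim \<E>(K)\<close>.\<close>

lemma matrix_mult_permmat_right: "(N ** permmat g) $ a $ b = N $ a $ g b"
  by (simp add: matrix_matrix_mult_def permmat_def if_distrib cong: if_cong)

lemma matrix_mult_permmat_left:
  assumes "bij g"
  shows "(permmat g ** N) $ a $ b = N $ inv g a $ b"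
proof -
  have "\<And>c. a = g c \<longleftrightarrow> c = inv g a"
    using assms by (metis bij_inv_eq_iff)
  then have "(permmat g ** N) $ a $ b = (\<Sum>c\<in>UNIV. if c = inv g a then N $ c $ b else 0)"
    by (simp add: matrix_matrix_mult_def permmat_def if_distrib[of "\<lambda>x. x * _"] cong: if_cong)
  then show ?thesis by simp
qed

lemma permmat_commute_iff:
  fixes N :: "real^'n::finite^'n"
  assumes "bij g"
  shows "N ** permmat g = permmat g ** N \<longleftrightarrow> (\<forall>a b. N $ g a $ g b = N $ a $ b)"
proof
  assume "N ** permmat g = permmat g ** N"
  then have "(N ** permmat g) $ g a $ b = (permmat g ** N) $ g a $ b" for a b
    by simp
  then show "\<forall>a b. N $ g a $ g b = N $ a $ b"
    using assms by (simp add: matrix_mult_permmat_right matrix_mult_permmat_left bij_is_inj)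
next
  assume inv: "\<forall>a b. N $ g a $ g b = N $ a $ b"
  have "N $ a $ g b = N $ inv g a $ b" for a b
    using inv[rule_format, of "inv g a" b] assms by (simp add: bij_is_surj surj_f_inv_f)
  then show "N ** permmat g = permmat g ** N"
    using assms by (simp add: vec_eq_iff matrix_mult_permmat_right matrix_mult_permmat_left)
qed

lemma commutant_iff:
  assumes "\<forall>g\<in>L. bij g"
  shows "X \<in> commutant L \<longleftrightarrow> (\<forall>g\<in>L. \<forall>a b. X $ g a $ g b = X $ a $ b)"
  using assms by (simp add: commutant_def permmat_commute_iff)

lemma kron_permmat: "kron (permmat h) (permmat k) = permmat (map_prod h k)"
  by (auto simp: kron_def permmat_def vec_eq_iff prod_eq_iff)

lemma kron_permmat_commute_imp_invariant:
  assumes "bij h" "bij k"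
    and "M ** kron (permmat h) (permmat k) = kron (permmat h) (permmat k) ** M"
  shows "M $ (h i, k j) $ (h i', k j') = M $ (i, j) $ (i', j')"
proof -
  have "bij (map_prod h k)"
    using assms(1,2) by (simp add: bij_def map_prod_surj prod.inj_map)
  with assms(3) show ?thesis
    by (simp add: kron_permmat permmat_commute_iff)
qed

text \<open>Column-major vectorisation, matching the index order of \<^const>\<open>reshape\<close>.\<close>
definition vectorize :: "real^'n::finite^'n \<Rightarrow> real^('n \<times> 'n)" where
  "vectorize X = (\<chi> c. X $ snd c $ fst c)"

lemma linear_vectorize: "linear vectorize"
  by (rule linearI) (auto simp: vectorize_def vec_eq_iff)

lemma row_reshape: "reshape M $ (i', i) = vectorize (\<chi> j j'. M $ (i, j) $ (i', j'))"
  by (simp add: reshape_def vectorize_def vec_eq_iff)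

lemma column_reshape:
  "column (j', j) (reshape M) = vectorize (\<chi> i i'. M $ (i, j) $ (i', j'))"
  by (simp add: reshape_def vectorize_def column_def vec_eq_iff)

lemma rank_le_dim_if_rows_in_linear_image:
  fixes A :: "real^'n::finite^'m::finite" and S :: "'a::euclidean_space set"
  assumes "linear f" "rows A \<subseteq> f ` S"
  shows "rank A \<le> dim S"
proof -
  have "dim (rows A) \<le> dim (f ` S)"
    using assms(2) by (rule dim_subset)
  also have "\<dots> \<le> dim S"
    using assms(1) by (rule dim_image_le)
  finally show ?thesis
    by (simp add: row_rank_def)
qed

lemma rank_le_dim_if_columns_in_linear_image:
  fixes A :: "real^'n::finite^'m::finite" and S :: "'a::euclidean_space set"
  assumes "linear f" "columns A \<subseteq> f ` S"
  shows "rank A \<le> dim S"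
proof -
  have "dim (columns A) \<le> dim (f ` S)"
    using assms(2) by (rule dim_subset)
  also have "\<dots> \<le> dim S"
    using assms(1) by (rule dim_image_le)
  finally show ?thesis
    by (simp add: column_rank_def)
qed

theorem mainTheorem4:
  fixes H :: "('p::finite \<Rightarrow> 'p) set" and K :: "('q::finite \<Rightarrow> 'q) set"
    and M :: "real^('p \<times> 'q)^('p \<times> 'q)"
  assumes "perm_group H" and "perm_group K"
    and "\<forall>h\<in>H. \<forall>k\<in>K. M ** kron (permmat h) (permmat k) = kron (permmat h) (permmat k) ** M"
  shows "rank (reshape M) \<le> min (dim (commutant H)) (dim (commutant K))"
proof -
  have bij_H: "\<forall>h\<in>H. bij h" and bij_K: "\<forall>k\<in>K. bij k" and "id \<in> H" "id \<in> K"
    using assms(1,2) by (auto simp: perm_group_def)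
  have "M $ (h i, j) $ (h i', j') = M $ (i, j) $ (i', j')" if "h \<in> H" for h i j i' j'
    using kron_permmat_commute_imp_invariant[of h id M i j i' j'] assms(3) bij_H that \<open>id \<in> K\<close>
    by simp
  then have "columns (reshape M) \<subseteq> vectorize ` commutant H"
    by (auto simp: columns_def column_reshape commutant_iff[OF bij_H])
  then have "rank (reshape M) \<le> dim (commutant H)"
    by (rule rank_le_dim_if_columns_in_linear_image[OF linear_vectorize])
  moreover
  have "M $ (i, k j) $ (i', k j') = M $ (i, j) $ (i', j')" if "k \<in> K" for k i j i' j'
    using kron_permmat_commute_imp_invariant[of id k M i j i' j'] assms(3) bij_K that \<open>id \<in> H\<close>
    by simp
  then have "rows (reshape M) \<subseteq> vectorize ` commutant K"
    by (auto simp: rows_def row_def row_reshape commutant_iff[OF bij_K])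
  then have "rank (reshape M) \<le> dim (commutant K)"
    by (rule rank_le_dim_if_rows_in_linear_image[OF linear_vectorize])
  ultimately show ?thesis
    by simp
qed

end
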